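(* Let $K\subset\mathbb{R}^{2n}$ be a centrally symmetric convex body ($K=-K$) satisfying $K=iK$, and let $r>0$ be the largest number such that $rB^{2n}\subset K$. Then $c^Z_{lin}(K)\le 2\pi r^2$.
   Context: A convex body is a bounded convex set with non-empty interior. $\mathbb{R}^{2n}$ with coordinates $(x_1,y_1,\dots,x_n,y_n)$ is identified with $\mathbb{C}^n$, and multiplication by $i$ is the linear map $i(x_1,y_1,\dots,x_n,y_n)=(-y_1,x_1,\dots,-y_n,x_n)$. $B^{2n}$ is the open Euclidean unit ball. The standard symplectic form is $\omega_{st}=\sum_j dx_j\wedge dy_j$ and $\mathrm{Sp}(\mathbb{R}^{2n})$ is the group of linear maps preserving it. $Z^{2n}(r)=\{(x_1,y_1,\dots,x_n,y_n): x_1^2+y_1^2<r^2\}$. The linearized cylindrical capacity is $c^Z_{lin}(U)=\inf\{\pi\rho^2 : \exists\,\psi\in\mathrm{Sp}(\mathbb{R}^{2n}) \text{ with } \psi(U)\subset Z^{2n}(\rho)\}$. *)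

theory Defs
  imports "HOL-Analysis.Analysis"
begin

text \<open>R^{2n} is modelled as C^n = complex ^ 'n, a real Euclidean space, with coordinate
  j corresponding to (x_j, y_j) = (Re, Im). The index type is well-ordered so that
  there is a distinguished first coordinate (the least index).\<close>

definition first_idx :: "'n::{finite,wellorder}" where
  "first_idx = (LEAST i. True)"

definition mult_i :: "complex ^ 'n \<Rightarrow> complex ^ 'n" where
  "mult_i v = (\<chi> j. \<i> * v $ j)"

definition omega_st :: "complex ^ 'n \<Rightarrow> complex ^ 'n \<Rightarrow> real" where
  "omega_st u v = (\<Sum>j\<in>UNIV. Re (u $ j) * Im (v $ j) - Im (u $ j) * Re (v $ j))"

definition symplectic_linear :: "(complex ^ 'n \<Rightarrow> complex ^ 'n) \<Rightarrow> bool" where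
  "symplectic_linear \<psi> \<longleftrightarrow> linear \<psi> \<and> (\<forall>u v. omega_st (\<psi> u) (\<psi> v) = omega_st u v)"

definition cylinder :: "real \<Rightarrow> (complex ^ 'n::{finite,wellorder}) set" where
  "cylinder r = {v. (Re (v $ first_idx))\<^sup>2 + (Im (v $ first_idx))\<^sup>2 < r\<^sup>2}"

definition convex_body :: "(complex ^ 'n) set \<Rightarrow> bool" where
  "convex_body K \<longleftrightarrow> bounded K \<and> convex K \<and> interior K \<noteq> {}"

definition cZ_lin :: "(complex ^ 'n::{finite,wellorder}) set \<Rightarrow> real" where
  "cZ_lin U = Inf {pi * \<rho>\<^sup>2 | \<rho>. \<exists>\<psi>. symplectic_linear \<psi> \<and> \<psi> ` U \<subseteq> cylinder \<rho>}"

end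

theory Submission
  imports Defs
begin

text \<open>Equip \<open>\<complex>\<^sup>n\<close> with the Hermitian product \<open>h(x,y) = \<Sum>\<^sub>j cnj x\<^sub>j y\<^sub>j\<close>: its real part
  is the Euclidean inner product and its imaginary part is \<open>\<omega>\<^sub>s\<^sub>t\<close>, so unitary maps are
  symplectic. Given \<open>s > r\<close>, pick \<open>q \<notin> K\<close> with \<open>|q| < s\<close> and separate it from \<open>K\<close> by a unit
  vector \<open>a\<close>, so that \<open>\<langle>a,y\<rangle> \<le> |q|\<close> on \<open>K\<close>. Because \<open>K = -K = iK\<close>, both
  \<open>Re h(a,y) = \<langle>a,y\<rangle>\<close> and \<open>Im h(a,y) = \<langle>ia,y\<rangle>\<close> lie in \<open>[-|q|, |q|]\<close>, hence
  \<open>|h(a,y)| < \<surd>2 s\<close> on \<open>K\<close>. A complex Householder reflection is a unitary map whose first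
  coordinate is \<open>h(a,-)\<close> up to a unimodular factor, so it maps \<open>K\<close> into \<open>Z(\<surd>2 s)\<close>, and
  \<open>c\<^sup>Z\<^sub>l\<^sub>i\<^sub>n(K) \<le> 2\<pi>s\<^sup>2\<close>. Finally let \<open>s\<close> decrease to \<open>r\<close>.\<close>

definition cinner :: "complex ^ 'n \<Rightarrow> complex ^ 'n \<Rightarrow> complex" where
  "cinner x y = (\<Sum>j\<in>UNIV. cnj (x $ j) * y $ j)"

definition cscale :: "complex \<Rightarrow> complex ^ 'n \<Rightarrow> complex ^ 'n" where
  "cscale c x = (\<chi> j. c * x $ j)"

lemma cscale_nth [simp]: "cscale c x $ j = c * x $ j"
  by (simp add: cscale_def)

lemma cinner_add_right: "cinner x (y + z) = cinner x y + cinner x z"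
  by (simp add: cinner_def distrib_left sum.distrib)

lemma cinner_diff_left: "cinner (x - y) z = cinner x z - cinner y z"
  by (simp add: cinner_def left_diff_distrib sum_subtractf)

lemma cinner_diff_right: "cinner x (y - z) = cinner x y - cinner x z"
  by (simp add: cinner_def right_diff_distrib sum_subtractf)

lemma cinner_cscale_left: "cinner (cscale c x) y = cnj c * cinner x y"
  by (simp add: cinner_def sum_distrib_left algebra_simps)

lemma cinner_cscale_right: "cinner x (cscale c y) = c * cinner x y"
  by (simp add: cinner_def sum_distrib_left algebra_simps)

lemma cinner_scaleR_right: "cinner x (c *\<^sub>R y) = of_real c * cinner x y"
  by (simp add: cinner_def sum_distrib_left scaleR_conv_of_real[where 'a=complex] algebra_simps)

lemma cinner_commute: "cinner y x = cnj (cinner x y)"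
  by (simp add: cinner_def mult.commute)

lemma Re_cinner: "Re (cinner x y) = inner x y"
  by (simp add: cinner_def inner_vec_def inner_complex_def Re_sum)

lemma Im_cinner: "Im (cinner x y) = omega_st x y"
  by (simp add: cinner_def omega_st_def Im_sum algebra_simps)

lemma Im_cinner_eq_inner_mult_i: "Im (cinner x y) = inner (mult_i x) y"
  by (simp add: cinner_def inner_vec_def mult_i_def inner_complex_def Im_sum algebra_simps)

lemma cinner_self: "cinner x x = of_real ((norm x)\<^sup>2)"
  by (simp add: complex_eq_iff Re_cinner Im_cinner omega_st_def power2_norm_eq_inner)

lemma cinner_axis_left: "cinner (axis i 1) x = x $ i"
proof -
  have "cinner (axis i 1) x = (\<Sum>j\<in>UNIV. if j = i then x $ j else 0)"
    unfolding cinner_def by (rule sum.cong) (auto simp: axis_def)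
  then show ?thesis by simp
qed

definition householder :: "complex ^ 'n \<Rightarrow> complex ^ 'n \<Rightarrow> complex ^ 'n" where
  "householder w x = x - cscale (2 * cinner w x / cinner w w) w"

lemma householder_self_adjoint: "cinner y (householder w x) = cinner (householder w y) x"
proof -
  have "cnj (cinner w w) = cinner w w" by (simp add: cinner_self)
  moreover have "cnj (cinner w y) = cinner y w" by (simp add: cinner_commute[of y w])
  ultimately show ?thesis
    unfolding householder_def cinner_diff_right cinner_diff_left
      cinner_cscale_right cinner_cscale_left
    by simp
qed

lemma cinner_householder: "cinner (householder w x) (householder w y) = cinner x y"
proof -
  have "cnj (cinner w w) = cinner w w" by (simp add: cinner_self)
  moreover have "cinner x w = cnj (cinner w x)" by (simp add: cinner_commute[of x w])
  ultimately show ?thesis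
    unfolding householder_def cinner_diff_right cinner_diff_left
      cinner_cscale_right cinner_cscale_left
    by (cases "cinner w w = 0") (simp_all add: field_simps)
qed

lemma linear_householder: "linear (householder w)"
proof (rule linearI)
  show "householder w (x + y) = householder w x + householder w y" for x y
    by (simp add: householder_def cinner_add_right vec_eq_iff algebra_simps add_divide_distrib)
  show "householder w (c *\<^sub>R x) = c *\<^sub>R householder w x" for c x
    by (simp add: householder_def cinner_scaleR_right vec_eq_iff scaleR_conv_of_real[where 'a=complex] algebra_simps)
qed

lemma symplectic_linear_householder: "symplectic_linear (householder w)"
  unfolding symplectic_linear_def
  by (metis linear_householder cinner_householder Im_cinner)

lemma householder_swap:
  assumes "cinner u u = cinner v v" and "cinner u v \<in> \<real>"
  shows "householder (u - v) u = v"
proof (cases "u = v")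
  case False
  define t where "t = cinner u v"
  have "cinner v u = t" using assms(2) by (simp add: t_def cinner_commute[of v u] Reals_cnj_iff)
  then have "cinner (u - v) (u - v) = 2 * (cinner u u - t)" and "cinner (u - v) u = cinner u u - t"
    using assms(1) by (simp_all add: cinner_diff_left cinner_diff_right t_def)
  moreover have "cinner (u - v) (u - v) \<noteq> 0" using False by (simp add: cinner_self)
  ultimately show ?thesis by (simp add: householder_def vec_eq_iff)
qed (simp add: householder_def vec_eq_iff)

text \<open>The phase \<open>\<mu>\<close> makes \<open>h(e\<^sub>i, \<mu>a) = \<mu> a\<^sub>i\<close> real, so that the Householder reflection
  in \<open>e\<^sub>i - \<mu>a\<close> swaps \<open>e\<^sub>i\<close> and \<open>\<mu>a\<close>; by self-adjointness its \<open>i\<close>-th coordinate is then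
  \<open>h(e\<^sub>i, -) \<circ> H = h(\<mu>a, -)\<close>.\<close>

lemma symplectic_coordinate_eq_cinner:
  fixes a :: "complex ^ 'n::finite"
  assumes "norm a = 1"
  obtains \<psi> where "symplectic_linear \<psi>" "\<And>x. cmod (\<psi> x $ i) = cmod (cinner a x)"
proof
  define \<mu> where "\<mu> = (if a $ i = 0 then 1 else cnj (a $ i) / cmod (a $ i))"
  define e :: "complex ^ 'n" where "e = axis i 1"
  define b where "b = cscale \<mu> a"
  have "cmod \<mu> = 1" by (simp add: \<mu>_def norm_divide)
  then have \<mu>_unimodular: "cnj \<mu> * \<mu> = 1"
    by (metis complex_norm_square mult.commute of_real_1 power_one)
  have "cinner b b = cnj \<mu> * \<mu> * cinner a a"
    by (simp add: b_def cinner_cscale_left cinner_cscale_right)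
  also have "\<dots> = cinner e e"
    using assms \<mu>_unimodular by (simp add: cinner_self e_def cinner_axis_left)
  finally have "cinner b b = cinner e e" .
  moreover have "cinner e b \<in> \<real>"
    by (simp add: e_def b_def cinner_axis_left \<mu>_def complex_mult_cnj complex_is_Real_iff)
  ultimately have swap: "householder (e - b) e = b"
    by (intro householder_swap) auto
  show "symplectic_linear (householder (e - b))"
    by (rule symplectic_linear_householder)
  fix x
  have "householder (e - b) x $ i = cinner e (householder (e - b) x)"
    by (simp add: e_def cinner_axis_left)
  also have "\<dots> = cinner b x"
    by (simp add: householder_self_adjoint swap)
  finally show "cmod (householder (e - b) x $ i) = cmod (cinner a x)"
    by (simp add: b_def cinner_cscale_left norm_mult \<open>cmod \<mu> = 1\<close>)
qed

lemma cZ_lin_le_of_cinner_bound: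
  fixes U :: "(complex ^ 'n::{finite,wellorder}) set"
  assumes "norm a = 1" and "\<And>y. y \<in> U \<Longrightarrow> cmod (cinner a y) < \<rho>"
  shows "cZ_lin U \<le> pi * \<rho>\<^sup>2"
proof -
  obtain \<psi> where \<psi>: "symplectic_linear \<psi>" "\<And>x. cmod (\<psi> x $ first_idx) = cmod (cinner a x)"
    using symplectic_coordinate_eq_cinner[OF assms(1)] by blast
  have "\<psi> ` U \<subseteq> cylinder \<rho>"
  proof clarify
    fix y assume "y \<in> U"
    then have "(cmod (\<psi> y $ first_idx))\<^sup>2 < \<rho>\<^sup>2"
      using assms(2) \<psi>(2) by (simp add: power_strict_mono)
    then show "\<psi> y \<in> cylinder \<rho>" by (simp add: cylinder_def cmod_power2)
  qed
  then have "pi * \<rho>\<^sup>2 \<in> {pi * \<rho>\<^sup>2 | \<rho>. \<exists>\<psi>. symplectic_linear \<psi> \<and> \<psi> ` U \<subseteq> cylinder \<rho>}"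
    using \<psi>(1) by blast
  moreover have "bdd_below {pi * \<rho>\<^sup>2 | \<rho>. \<exists>\<psi>. symplectic_linear \<psi> \<and> \<psi> ` U \<subseteq> cylinder \<rho>}"
    by (rule bdd_belowI[of _ 0]) auto
  ultimately show ?thesis unfolding cZ_lin_def by (rule cInf_lower)
qed

lemma convex_separating_unit_vector:
  fixes K :: "'a::euclidean_space set"
  assumes "convex K" and "q \<notin> K"
  obtains a where "norm a = 1" "\<And>y. y \<in> K \<Longrightarrow> inner a y \<le> inner a q"
proof -
  have "convex ((\<lambda>y. q - y) ` K)"
  proof -
    have "(\<lambda>y. q - y) ` K = (+) q ` (uminus ` K)" by (simp add: image_image)
    then show ?thesis using assms(1) by (simp add: convex_negations)
  qed
  moreover have "0 \<notin> (\<lambda>y. q - y) ` K"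
    using assms(2) by auto
  ultimately obtain z where z: "z \<noteq> 0" "\<forall>v\<in>(\<lambda>y. q - y) ` K. 0 \<le> inner z v"
    using separating_hyperplane_set_0 by blast
  show ?thesis
  proof
    show "norm (sgn z) = 1" using z(1) by (simp add: norm_sgn)
    fix y assume "y \<in> K"
    then have "inner z y \<le> inner z q" using z(2) by (auto simp: inner_diff_right)
    then show "inner (sgn z) y \<le> inner (sgn z) q"
      by (simp add: sgn_div_norm mult_left_mono)
  qed
qed

lemma cmod_le_sqrt2_mult:
  assumes "\<bar>Re z\<bar> \<le> c" and "\<bar>Im z\<bar> \<le> c"
  shows "cmod z \<le> sqrt 2 * c"
proof -
  have "(Re z)\<^sup>2 \<le> c\<^sup>2" and "(Im z)\<^sup>2 \<le> c\<^sup>2"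
    using power_mono[OF assms(1) abs_ge_zero, of 2] power_mono[OF assms(2) abs_ge_zero, of 2]
    by simp_all
  then have "(Re z)\<^sup>2 + (Im z)\<^sup>2 \<le> 2 * c\<^sup>2" by simp
  then have "cmod z \<le> sqrt (2 * c\<^sup>2)"
    by (simp add: cmod_def)
  also have "\<dots> = sqrt 2 * c"
    using assms abs_ge_zero order_trans by (simp add: real_sqrt_mult)
  finally show ?thesis .
qed

lemma cmod_cinner_le_of_neg_mult_i_invariant:
  assumes "uminus ` K = K" and "mult_i ` K = K"
    and bound: "\<And>y. y \<in> K \<Longrightarrow> inner a y \<le> c" and "y \<in> K"
  shows "cmod (cinner a y) \<le> sqrt 2 * c"
proof (rule cmod_le_sqrt2_mult)
  have neg: "- y \<in> K" if "y \<in> K" for y using assms(1) that by blast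
  have rot: "mult_i y \<in> K" if "y \<in> K" for y using assms(2) that by blast
  have "inner (mult_i a) y = - inner a (mult_i y)"
    by (simp add: inner_vec_def mult_i_def inner_complex_def algebra_simps sum_negf[symmetric])
  moreover have "mult_i (- y) = - mult_i y" by (simp add: mult_i_def vec_eq_iff)
  ultimately have "\<bar>inner (mult_i a) y\<bar> \<le> c"
    using bound[OF rot[OF \<open>y \<in> K\<close>]] bound[OF neg[OF rot[OF \<open>y \<in> K\<close>]]]
    by (auto simp: neg rot)
  then show "\<bar>Im (cinner a y)\<bar> \<le> c" by (simp add: Im_cinner_eq_inner_mult_i)
  show "\<bar>Re (cinner a y)\<bar> \<le> c"
    using bound[OF \<open>y \<in> K\<close>] bound[OF neg[OF \<open>y \<in> K\<close>]] by (auto simp: Re_cinner)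
qed

lemma cZ_lin_le_of_point_outside:
  fixes K :: "(complex ^ 'n::{finite,wellorder}) set"
  assumes "convex K" and "uminus ` K = K" and "mult_i ` K = K"
    and "q \<notin> K" and "norm q < s"
  shows "cZ_lin K \<le> 2 * pi * s\<^sup>2"
proof -
  obtain a where a: "norm a = 1" "\<And>y. y \<in> K \<Longrightarrow> inner a y \<le> inner a q"
    using convex_separating_unit_vector[OF assms(1,4)] by blast
  have "inner a q \<le> norm q"
    using norm_cauchy_schwarz[of a q] a(1) by simp
  then have "\<And>y. y \<in> K \<Longrightarrow> inner a y \<le> norm q"
    using a(2) order_trans by blast
  then have "\<And>y. y \<in> K \<Longrightarrow> cmod (cinner a y) \<le> sqrt 2 * norm q"
    by (rule cmod_cinner_le_of_neg_mult_i_invariant[OF assms(2,3)])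
  moreover have "sqrt 2 * norm q < sqrt 2 * s"
    using assms(5) by simp
  ultimately have "\<And>y. y \<in> K \<Longrightarrow> cmod (cinner a y) < sqrt 2 * s"
    by (meson order_le_less_trans)
  then have "cZ_lin K \<le> pi * (sqrt 2 * s)\<^sup>2"
    by (rule cZ_lin_le_of_cinner_bound[OF a(1)])
  then show ?thesis by (simp add: power_mult_distrib)
qed

theorem mainTheorem3:
  fixes K :: "(complex ^ 'n::{finite,wellorder}) set" and r :: real
  assumes "convex_body K"
    and "uminus ` K = K"
    and "mult_i ` K = K"
    and "r > 0"
    and "ball 0 r \<subseteq> K"
    and "\<forall>s. ball 0 s \<subseteq> K \<longrightarrow> s \<le> r"
  shows "cZ_lin K \<le> 2 * pi * r\<^sup>2"
proof (rule dense_ge)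
  \<comment> \<open>Only the maximality of \<open>r\<close> matters.\<close>
  fix c assume c: "2 * pi * r\<^sup>2 < c"
  define s where "s = sqrt (c / (2 * pi))"
  have "r\<^sup>2 < c / (2 * pi)"
    using c by (simp add: field_simps)
  then have "r < s"
    using \<open>r > 0\<close> by (simp add: s_def real_less_rsqrt)
  then have "\<not> ball 0 s \<subseteq> K"
    using assms(6) by force
  then obtain q where "norm q < s" "q \<notin> K"
    by (auto simp: subset_iff)
  moreover have "convex K"
    using assms(1) by (simp add: convex_body_def)
  ultimately have "cZ_lin K \<le> 2 * pi * s\<^sup>2"
    using cZ_lin_le_of_point_outside[OF _ assms(2,3)] by blast
  moreover have "0 \<le> c / (2 * pi)"
    using \<open>r\<^sup>2 < c / (2 * pi)\<close> zero_le_power2[of r] by linarith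
  then have "2 * pi * s\<^sup>2 = c"
    by (simp add: s_def)
  ultimately show "cZ_lin K \<le> c" by simp
qed

end
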